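(* Let $S$ be a $\Gamma$-semiring with zero having a left unity and a right unity, and let $L$ be its left operator semiring. Let $I$ be an ideal (resp. left ideal, right ideal) of $L$ and $\lambda_I$ its characteristic function. Then $(\lambda_I)^{+}=\lambda_{I^{+}}$. Moreover, $I^{+}$ is an ideal (resp. left ideal, right ideal) of $S$.
   Context: A $\Gamma$-semiring: $S$ and $\Gamma$ are additive commutative semigroups with a map $S\times\Gamma\times S\to S$, $(a,\alpha,b)\mapsto a\alpha b$, such that $(a+b)\alpha c=a\alpha c+b\alpha c$, $a\alpha(b+c)=a\alpha b+a\alpha c$, $a(\alpha+\beta)b=a\alpha b+a\beta b$, $a\alpha(b\beta c)=(a\alpha b)\beta c$. With zero: $(S,+)$, $(\Gamma,+)$ are monoids, $0_S\alpha x=0_S=x\alpha0_S$, $x0_\Gamma y=0_S$. Left operator semiring $L$: $F$ is the free additive commutative semigroup on $S\times\Gamma$; $\sum_i(x_i,\alpha_i)\,\rho\,\sum_j(y_j,\beta_j)$ iff $\sum_ix_i\alpha_ia=\sum_jy_j\beta_ja$ for all $a\in S$; $L=F/\rho$, classes $\sum_i[x_i,\alpha_i]$, multiplication $(\sum_i[x_i,\alpha_i])(\sum_j[y_j,\beta_j])=\sum_{i,j}[x_i\alpha_iy_j,\beta_j]$. A left unity of $S$ is $\sum_i[e_i,\delta_i]\in L$ with $\sum_ie_i\delta_ia=a$ for all $a$; a right unity is a finite family $\gamma_j\in\Gamma,f_j\in S$ with $\sum_ja\gamma_jf_j=a$ for all $a$. A left ideal of $S$ is a nonempty subset $J$ closed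 under addition with $x\gamma a\in J$ for all $x\in S,\gamma\in\Gamma,a\in J$; right ideal: $a\gamma x\in J$; ideal: both. Ideals (left, right) of the semiring $L$ are defined in the usual way. For $P\subseteq L$: $P^{+}=\{a\in S:[a,\gamma]\in P\text{ for all }\gamma\in\Gamma\}$. For a fuzzy subset $\mu$ of $L$: $\mu^{+}(x)=\inf_{\gamma\in\Gamma}\mu([x,\gamma])$. $\lambda_X$ denotes the characteristic function of a set $X$. *)

theory Defs
  imports Complex_Main "HOL-Library.Multiset"
begin

definition gamma_semiring_zero ::
  "('s::comm_monoid_add \<Rightarrow> 'g::comm_monoid_add \<Rightarrow> 's \<Rightarrow> 's) \<Rightarrow> bool" where
  "gamma_semiring_zero tm \<longleftrightarrow>
     (\<forall>a b c \<alpha>. tm (a + b) \<alpha> c = tm a \<alpha> c + tm b \<alpha> c) \<and>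
     (\<forall>a b c \<alpha>. tm a \<alpha> (b + c) = tm a \<alpha> b + tm a \<alpha> c) \<and>
     (\<forall>a b \<alpha> \<beta>. tm a (\<alpha> + \<beta>) b = tm a \<alpha> b + tm a \<beta> b) \<and>
     (\<forall>a b c \<alpha> \<beta>. tm a \<alpha> (tm b \<beta> c) = tm (tm a \<alpha> b) \<beta> c) \<and>
     (\<forall>x \<alpha>. tm 0 \<alpha> x = 0 \<and> tm x \<alpha> 0 = 0) \<and>
     (\<forall>x y. tm x 0 y = 0)"

(* Elements of the free commutative semigroup F on S x Gamma: nonempty finite multisets *)
definition evalF :: "('s::comm_monoid_add \<Rightarrow> 'g \<Rightarrow> 's \<Rightarrow> 's) \<Rightarrow> ('s \<times> 'g) multiset \<Rightarrow> 's \<Rightarrow> 's" where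
  "evalF tm m a = (\<Sum>(x,\<alpha>)\<in>#m. tm x \<alpha> a)"

definition rhoF :: "('s::comm_monoid_add \<Rightarrow> 'g \<Rightarrow> 's \<Rightarrow> 's) \<Rightarrow> ('s \<times> 'g) multiset \<Rightarrow> ('s \<times> 'g) multiset \<Rightarrow> bool" where
  "rhoF tm m n \<longleftrightarrow> (\<forall>a. evalF tm m a = evalF tm n a)"

definition clsF :: "('s::comm_monoid_add \<Rightarrow> 'g \<Rightarrow> 's \<Rightarrow> 's) \<Rightarrow> ('s \<times> 'g) multiset \<Rightarrow> ('s \<times> 'g) multiset set" where
  "clsF tm m = {n. n \<noteq> {#} \<and> rhoF tm m n}"

(* the left operator semiring L = F / rho, as a set of classes *)
definition Lcarrier :: "('s::comm_monoid_add \<Rightarrow> 'g \<Rightarrow> 's \<Rightarrow> 's) \<Rightarrow> ('s \<times> 'g) multiset set set" where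
  "Lcarrier tm = {clsF tm m | m. m \<noteq> {#}}"

definition gen :: "('s::comm_monoid_add \<Rightarrow> 'g \<Rightarrow> 's \<Rightarrow> 's) \<Rightarrow> 's \<Rightarrow> 'g \<Rightarrow> ('s \<times> 'g) multiset set" where
  "gen tm x \<gamma> = clsF tm {#(x, \<gamma>)#}"

definition mulF :: "('s::comm_monoid_add \<Rightarrow> 'g \<Rightarrow> 's \<Rightarrow> 's) \<Rightarrow> ('s \<times> 'g) multiset \<Rightarrow> ('s \<times> 'g) multiset \<Rightarrow> ('s \<times> 'g) multiset" where
  "mulF tm m n = (\<Sum>(x,\<alpha>)\<in>#m. \<Sum>(y,\<beta>)\<in>#n. {#(tm x \<alpha> y, \<beta>)#})"

definition Ladd :: "('s::comm_monoid_add \<Rightarrow> 'g \<Rightarrow> 's \<Rightarrow> 's) \<Rightarrow> ('s \<times> 'g) multiset set \<Rightarrow> ('s \<times> 'g) multiset set \<Rightarrow> ('s \<times> 'g) multiset set" where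
  "Ladd tm P Q = {k. \<exists>m\<in>P. \<exists>n\<in>Q. k \<in> clsF tm (m + n)}"

definition Lmul :: "('s::comm_monoid_add \<Rightarrow> 'g \<Rightarrow> 's \<Rightarrow> 's) \<Rightarrow> ('s \<times> 'g) multiset set \<Rightarrow> ('s \<times> 'g) multiset set \<Rightarrow> ('s \<times> 'g) multiset set" where
  "Lmul tm P Q = {k. \<exists>m\<in>P. \<exists>n\<in>Q. k \<in> clsF tm (mulF tm m n)}"

definition L_left_ideal where
  "L_left_ideal tm I \<longleftrightarrow> I \<noteq> {} \<and> I \<subseteq> Lcarrier tm \<and>
     (\<forall>P\<in>I. \<forall>Q\<in>I. Ladd tm P Q \<in> I) \<and> (\<forall>R\<in>Lcarrier tm. \<forall>P\<in>I. Lmul tm R P \<in> I)"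

definition L_right_ideal where
  "L_right_ideal tm I \<longleftrightarrow> I \<noteq> {} \<and> I \<subseteq> Lcarrier tm \<and>
     (\<forall>P\<in>I. \<forall>Q\<in>I. Ladd tm P Q \<in> I) \<and> (\<forall>R\<in>Lcarrier tm. \<forall>P\<in>I. Lmul tm P R \<in> I)"

definition L_ideal where
  "L_ideal tm I \<longleftrightarrow> L_left_ideal tm I \<and> L_right_ideal tm I"

definition S_left_ideal :: "('s::comm_monoid_add \<Rightarrow> 'g \<Rightarrow> 's \<Rightarrow> 's) \<Rightarrow> 's set \<Rightarrow> bool" where
  "S_left_ideal tm J \<longleftrightarrow> J \<noteq> {} \<and> (\<forall>a\<in>J. \<forall>b\<in>J. a + b \<in> J) \<and>
     (\<forall>x \<gamma>. \<forall>a\<in>J. tm x \<gamma> a \<in> J)"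

definition S_right_ideal :: "('s::comm_monoid_add \<Rightarrow> 'g \<Rightarrow> 's \<Rightarrow> 's) \<Rightarrow> 's set \<Rightarrow> bool" where
  "S_right_ideal tm J \<longleftrightarrow> J \<noteq> {} \<and> (\<forall>a\<in>J. \<forall>b\<in>J. a + b \<in> J) \<and>
     (\<forall>x \<gamma>. \<forall>a\<in>J. tm a \<gamma> x \<in> J)"

definition S_ideal where
  "S_ideal tm J \<longleftrightarrow> S_left_ideal tm J \<and> S_right_ideal tm J"

definition has_left_unity :: "('s::comm_monoid_add \<Rightarrow> 'g \<Rightarrow> 's \<Rightarrow> 's) \<Rightarrow> bool" where
  "has_left_unity tm \<longleftrightarrow> (\<exists>m. m \<noteq> {#} \<and> (\<forall>a. evalF tm m a = a))"

definition has_right_unity :: "('s::comm_monoid_add \<Rightarrow> 'g \<Rightarrow> 's \<Rightarrow> 's) \<Rightarrow> bool" where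
  "has_right_unity tm \<longleftrightarrow> (\<exists>k :: ('g \<times> 's) multiset. \<forall>a. (\<Sum>(\<gamma>,f)\<in>#k. tm a \<gamma> f) = a)"

definition Lplus :: "('s::comm_monoid_add \<Rightarrow> 'g \<Rightarrow> 's \<Rightarrow> 's) \<Rightarrow> ('s \<times> 'g) multiset set set \<Rightarrow> 's set" where
  "Lplus tm P = {a. \<forall>\<gamma>. gen tm a \<gamma> \<in> P}"

definition fuzzy_plus :: "('s::comm_monoid_add \<Rightarrow> 'g \<Rightarrow> 's \<Rightarrow> 's) \<Rightarrow> (('s \<times> 'g) multiset set \<Rightarrow> real) \<Rightarrow> 's \<Rightarrow> real" where
  "fuzzy_plus tm \<mu> x = (INF \<gamma>. \<mu> (gen tm x \<gamma>))"

definition charfun :: "'a set \<Rightarrow> 'a \<Rightarrow> real" where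
  "charfun X x = (if x \<in> X then 1 else 0)"

end

theory Submission
  imports Defs
begin

text \<open>The identity for the fuzzy part holds for every \<open>I\<close>: the infimum of a \<open>0/1\<close>-valued family
is \<open>1\<close> exactly when every member is \<open>1\<close>. For the ideal part, the classes \<open>[a,\<gamma>]\<close> satisfy
\<open>[a,\<gamma>] + [b,\<gamma>] = [a+b,\<gamma>]\<close> and \<open>[x,\<gamma>][a,\<delta>] = [x\<gamma>a,\<delta>]\<close>, so closure of \<open>I\<close> in \<open>L\<close> transfers
to closure of \<open>I\<^sup>+\<close> in \<open>S\<close>; nonemptiness of \<open>I\<^sup>+\<close> comes from \<open>[0,\<gamma>]\<close>, which absorbs every
element of \<open>L\<close> on either side and therefore lies in every one-sided ideal.\<close>

lemma gamma_semiring_zeroD: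
  assumes "gamma_semiring_zero tm"
  shows "tm (a + b) \<alpha> c = tm a \<alpha> c + tm b \<alpha> c"
    and "tm a \<alpha> (b + c) = tm a \<alpha> b + tm a \<alpha> c"
    and "tm a \<alpha> (tm b \<beta> c) = tm (tm a \<alpha> b) \<beta> c"
    and "tm 0 \<alpha> x = 0" and "tm x \<alpha> 0 = 0"
  using assms by (simp_all add: gamma_semiring_zero_def)

lemma evalF_empty [simp]: "evalF tm {#} a = 0"
  by (simp add: evalF_def)

lemma evalF_add_mset [simp]: "evalF tm (add_mset (x, \<alpha>) m) a = tm x \<alpha> a + evalF tm m a"
  by (simp add: evalF_def)

lemma evalF_plus: "evalF tm (m + n) a = evalF tm m a + evalF tm n a"
  by (simp add: evalF_def)

lemma evalF_zero:
  assumes "gamma_semiring_zero tm"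
  shows "evalF tm m 0 = 0"
  by (induction m) (auto simp: gamma_semiring_zeroD[OF assms])

lemma mulF_plus_left: "mulF tm (m + m') n = mulF tm m n + mulF tm m' n"
  by (simp add: mulF_def)

lemma evalF_mulF_singleton:
  assumes g: "gamma_semiring_zero tm"
  shows "evalF tm (mulF tm {#(x, \<alpha>)#} n) a = tm x \<alpha> (evalF tm n a)"
proof (induction n)
  case empty
  then show ?case by (simp add: mulF_def gamma_semiring_zeroD[OF g])
next
  case (add p n)
  obtain y \<beta> where p: "p = (y, \<beta>)" by force
  have "mulF tm {#(x, \<alpha>)#} (add_mset p n) = add_mset (tm x \<alpha> y, \<beta>) (mulF tm {#(x, \<alpha>)#} n)"
    by (simp add: mulF_def p)
  then show ?case
    using add by (simp add: p gamma_semiring_zeroD[OF g])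
qed

lemma evalF_mulF:
  assumes "gamma_semiring_zero tm"
  shows "evalF tm (mulF tm m n) a = evalF tm m (evalF tm n a)"
proof (induction m)
  case empty
  then show ?case by (simp add: mulF_def)
next
  case (add p m)
  obtain x \<alpha> where p: "p = (x, \<alpha>)" by force
  have "mulF tm (add_mset p m) n = mulF tm {#p#} n + mulF tm m n"
    using mulF_plus_left[of tm "{#p#}" m n] by simp
  then show ?case
    using add by (simp add: p evalF_plus evalF_mulF_singleton[OF assms])
qed

lemma mem_clsF: "k \<in> clsF tm m \<longleftrightarrow> k \<noteq> {#} \<and> (\<forall>a. evalF tm k a = evalF tm m a)"
  by (auto simp: clsF_def rhoF_def)

lemma clsF_eqI: "(\<And>a. evalF tm m a = evalF tm n a) \<Longrightarrow> clsF tm m = clsF tm n"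
  by (auto simp: mem_clsF)

lemma Ladd_clsF:
  assumes "m \<noteq> {#}" "n \<noteq> {#}"
  shows "Ladd tm (clsF tm m) (clsF tm n) = clsF tm (m + n)"
proof -
  have "m \<in> clsF tm m" "n \<in> clsF tm n"
    using assms by (auto simp: mem_clsF)
  then show ?thesis
    unfolding Ladd_def by (auto simp: mem_clsF evalF_plus)
qed

lemma Lmul_clsF:
  assumes "gamma_semiring_zero tm" "m \<noteq> {#}" "n \<noteq> {#}"
  shows "Lmul tm (clsF tm m) (clsF tm n) = clsF tm (mulF tm m n)"
proof -
  have "m \<in> clsF tm m" "n \<in> clsF tm n"
    using assms by (auto simp: mem_clsF)
  then show ?thesis
    unfolding Lmul_def by (auto simp: mem_clsF evalF_mulF[OF assms(1)])
qed

lemma gen_in_Lcarrier: "gen tm x \<gamma> \<in> Lcarrier tm"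
  by (auto simp: gen_def Lcarrier_def)

lemma Ladd_gen:
  assumes "gamma_semiring_zero tm"
  shows "Ladd tm (gen tm a \<gamma>) (gen tm b \<gamma>) = gen tm (a + b) \<gamma>"
  unfolding gen_def
  by (subst Ladd_clsF) (auto intro!: clsF_eqI simp: evalF_plus gamma_semiring_zeroD[OF assms] add.commute)

lemma Lmul_gen:
  assumes "gamma_semiring_zero tm"
  shows "Lmul tm (gen tm a \<gamma>) (gen tm b \<delta>) = gen tm (tm a \<gamma> b) \<delta>"
  unfolding gen_def
  by (subst Lmul_clsF[OF assms]) (auto intro!: clsF_eqI simp: evalF_mulF[OF assms] gamma_semiring_zeroD[OF assms])

lemma Lmul_gen_zero_left:
  assumes g: "gamma_semiring_zero tm" and P: "P \<in> Lcarrier tm"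
  shows "Lmul tm (gen tm 0 \<gamma>) P = gen tm 0 \<gamma>"
proof -
  obtain m where m: "m \<noteq> {#}" "P = clsF tm m"
    using P unfolding Lcarrier_def by blast
  have "evalF tm (mulF tm {#(0, \<gamma>)#} m) a = evalF tm {#(0, \<gamma>)#} a" for a
    by (simp add: evalF_mulF_singleton[OF g] gamma_semiring_zeroD(4)[OF g])
  then have "clsF tm (mulF tm {#(0, \<gamma>)#} m) = clsF tm {#(0, \<gamma>)#}"
    by (rule clsF_eqI)
  then show ?thesis
    unfolding m(2) gen_def by (simp add: Lmul_clsF[OF g _ m(1)])
qed

lemma Lmul_gen_zero_right:
  assumes g: "gamma_semiring_zero tm" and P: "P \<in> Lcarrier tm"
  shows "Lmul tm P (gen tm 0 \<gamma>) = gen tm 0 \<gamma>"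
proof -
  obtain m where m: "m \<noteq> {#}" "P = clsF tm m"
    using P unfolding Lcarrier_def by blast
  have "evalF tm (mulF tm m {#(0, \<gamma>)#}) a = evalF tm {#(0, \<gamma>)#} a" for a
    by (simp add: evalF_mulF[OF g] evalF_zero[OF g] gamma_semiring_zeroD(4)[OF g])
  then have "clsF tm (mulF tm m {#(0, \<gamma>)#}) = clsF tm {#(0, \<gamma>)#}"
    by (rule clsF_eqI)
  then show ?thesis
    unfolding m(2) gen_def by (simp add: Lmul_clsF[OF g m(1)])
qed

lemma fuzzy_plus_charfun: "fuzzy_plus tm (charfun I) = charfun (Lplus tm I)"
proof
  fix x
  show "fuzzy_plus tm (charfun I) x = charfun (Lplus tm I) x"
  proof (cases "x \<in> Lplus tm I")
    case True
    then show ?thesis by (simp add: fuzzy_plus_def charfun_def Lplus_def)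
  next
    case False
    then obtain \<gamma> where "charfun I (gen tm x \<gamma>) = 0"
      by (auto simp: Lplus_def charfun_def)
    then have "0 \<in> range (\<lambda>\<delta>. charfun I (gen tm x \<delta>))"
      by (metis rangeI)
    then have "(INF \<delta>. charfun I (gen tm x \<delta>)) = 0"
      by (rule cInf_eq_minimum) (auto simp: charfun_def)
    with False show ?thesis
      by (simp add: fuzzy_plus_def charfun_def)
  qed
qed

lemma zero_in_Lplus_left_ideal:
  assumes g: "gamma_semiring_zero tm" and I: "L_left_ideal tm I"
  shows "0 \<in> Lplus tm I"
proof -
  have ne: "I \<noteq> {}" and sub: "I \<subseteq> Lcarrier tm"
    and mul: "\<forall>R\<in>Lcarrier tm. \<forall>P\<in>I. Lmul tm R P \<in> I"
    using I by (simp_all add: L_left_ideal_def)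
  obtain P where P: "P \<in> I"
    using ne by blast
  have "Lmul tm (gen tm 0 \<gamma>) P \<in> I" for \<gamma>
    using mul P gen_in_Lcarrier[of tm 0 \<gamma>] by blast
  then show ?thesis
    using P sub by (simp add: Lplus_def Lmul_gen_zero_left[OF g] subset_eq)
qed

lemma zero_in_Lplus_right_ideal:
  assumes g: "gamma_semiring_zero tm" and I: "L_right_ideal tm I"
  shows "0 \<in> Lplus tm I"
proof -
  have ne: "I \<noteq> {}" and sub: "I \<subseteq> Lcarrier tm"
    and mul: "\<forall>R\<in>Lcarrier tm. \<forall>P\<in>I. Lmul tm P R \<in> I"
    using I by (simp_all add: L_right_ideal_def)
  obtain P where P: "P \<in> I"
    using ne by blast
  have "Lmul tm P (gen tm 0 \<gamma>) \<in> I" for \<gamma>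
    using mul P gen_in_Lcarrier[of tm 0 \<gamma>] by blast
  then show ?thesis
    using P sub by (simp add: Lplus_def Lmul_gen_zero_right[OF g] subset_eq)
qed

lemma Lplus_add_closed:
  assumes g: "gamma_semiring_zero tm" and I: "\<forall>P\<in>I. \<forall>Q\<in>I. Ladd tm P Q \<in> I"
    and a: "a \<in> Lplus tm I" and b: "b \<in> Lplus tm I"
  shows "a + b \<in> Lplus tm I"
proof -
  have "gen tm a \<gamma> \<in> I" "gen tm b \<gamma> \<in> I" for \<gamma>
    using a b by (simp_all add: Lplus_def)
  then have "Ladd tm (gen tm a \<gamma>) (gen tm b \<gamma>) \<in> I" for \<gamma>
    using I by blast
  then show ?thesis
    by (simp add: Lplus_def Ladd_gen[OF g])
qed

lemma Lplus_left_mult_closed: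
  assumes g: "gamma_semiring_zero tm" and I: "\<forall>R\<in>Lcarrier tm. \<forall>P\<in>I. Lmul tm R P \<in> I"
    and a: "a \<in> Lplus tm I"
  shows "tm x \<gamma> a \<in> Lplus tm I"
proof -
  have "gen tm a \<delta> \<in> I" for \<delta>
    using a by (simp add: Lplus_def)
  then have "Lmul tm (gen tm x \<gamma>) (gen tm a \<delta>) \<in> I" for \<delta>
    using I gen_in_Lcarrier[of tm x \<gamma>] by blast
  then show ?thesis
    by (simp add: Lplus_def Lmul_gen[OF g])
qed

lemma Lplus_right_mult_closed:
  assumes g: "gamma_semiring_zero tm" and I: "\<forall>R\<in>Lcarrier tm. \<forall>P\<in>I. Lmul tm P R \<in> I"
    and a: "a \<in> Lplus tm I"
  shows "tm a \<gamma> x \<in> Lplus tm I"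
proof -
  have "gen tm a \<gamma> \<in> I"
    using a by (simp add: Lplus_def)
  then have "Lmul tm (gen tm a \<gamma>) (gen tm x \<delta>) \<in> I" for \<delta>
    using I gen_in_Lcarrier[of tm x \<delta>] by blast
  then show ?thesis
    by (simp add: Lplus_def Lmul_gen[OF g])
qed

lemma S_left_ideal_Lplus:
  assumes g: "gamma_semiring_zero tm" and I: "L_left_ideal tm I"
  shows "S_left_ideal tm (Lplus tm I)"
  unfolding S_left_ideal_def
  using zero_in_Lplus_left_ideal[OF g I] I Lplus_add_closed[OF g] Lplus_left_mult_closed[OF g]
  by (auto simp: L_left_ideal_def)

lemma S_right_ideal_Lplus:
  assumes g: "gamma_semiring_zero tm" and I: "L_right_ideal tm I"
  shows "S_right_ideal tm (Lplus tm I)"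
  unfolding S_right_ideal_def
  using zero_in_Lplus_right_ideal[OF g I] I Lplus_add_closed[OF g] Lplus_right_mult_closed[OF g]
  by (auto simp: L_right_ideal_def)

theorem lemma3p7:
  fixes tm :: "'s::comm_monoid_add \<Rightarrow> 'g::comm_monoid_add \<Rightarrow> 's \<Rightarrow> 's"
    and I :: "('s \<times> 'g) multiset set set"
  assumes "gamma_semiring_zero tm"
    and "has_left_unity tm" and "has_right_unity tm"
  shows "(L_ideal tm I \<longrightarrow>
            fuzzy_plus tm (charfun I) = charfun (Lplus tm I) \<and> S_ideal tm (Lplus tm I)) \<and>
         (L_left_ideal tm I \<longrightarrow>
            fuzzy_plus tm (charfun I) = charfun (Lplus tm I) \<and> S_left_ideal tm (Lplus tm I)) \<and>
         (L_right_ideal tm I \<longrightarrow>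
            fuzzy_plus tm (charfun I) = charfun (Lplus tm I) \<and> S_right_ideal tm (Lplus tm I))"
  using fuzzy_plus_charfun S_left_ideal_Lplus[OF assms(1)] S_right_ideal_Lplus[OF assms(1)]
  by (auto simp: L_ideal_def S_ideal_def)

end
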